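(* Let $K$ be a field, $I$ a monomial ideal in $R=K[x_1,\ldots,x_n]$, and $1\le j\le n$. If $I$ has the copersistence property, then the contraction $I/x_j$ has the copersistence property.
   Context: An ideal $I$ in a commutative Noetherian ring $R$ has the copersistence property if $\mathrm{Ass}_R(R/I^k)\supseteq\mathrm{Ass}_R(R/I^{k+1})$ for all $k\ge1$. If $\{u_1,\ldots,u_m\}$ is the minimal monomial generating set of $I$, the contraction $I/x_j$ is the monomial ideal (in the polynomial ring over $K$ in the variables other than $x_j$) generated by the monomials obtained from $u_1,\ldots,u_m$ by setting $x_j=1$. *)

theory Defs
  imports "HOL-Library.Poly_Mapping"
begin

text \<open>Multivariate polynomials over a field 'k in variables indexed by nat:
  a monomial x^m is a finitely supported exponent vector m, a polynomial is a
  finitely supported map from monomials to coefficients (multiplication is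
  convolution, from HOL-Library.Poly_Mapping).\<close>

type_synonym 'k mpoly = "(nat \<Rightarrow>\<^sub>0 nat) \<Rightarrow>\<^sub>0 'k"

definition poly_ring :: "nat set \<Rightarrow> ('k::field) mpoly set" where
  "poly_ring V = {p :: 'k mpoly. \<forall>m\<in>Poly_Mapping.keys p. Poly_Mapping.keys m \<subseteq> V}"

definition is_ideal_in :: "('k::field) mpoly set \<Rightarrow> 'k mpoly set \<Rightarrow> bool" where
  "is_ideal_in R I \<longleftrightarrow> I \<subseteq> R \<and> 0 \<in> I \<and> (\<forall>a\<in>I. \<forall>b\<in>I. a + b \<in> I)
     \<and> (\<forall>r\<in>R. \<forall>a\<in>I. r * a \<in> I)"

definition ideal_gen :: "('k::field) mpoly set \<Rightarrow> 'k mpoly set \<Rightarrow> 'k mpoly set" where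
  "ideal_gen R S = \<Inter>{J. is_ideal_in R J \<and> S \<subseteq> J}"

definition prime_ideal_in :: "('k::field) mpoly set \<Rightarrow> 'k mpoly set \<Rightarrow> bool" where
  "prime_ideal_in R P \<longleftrightarrow> is_ideal_in R P \<and> P \<noteq> R \<and>
     (\<forall>a\<in>R. \<forall>b\<in>R. a * b \<in> P \<longrightarrow> a \<in> P \<or> b \<in> P)"

text \<open>Ass_R(R/I): primes of R that are annihilators of an element of R/I.\<close>
definition Ass :: "('k::field) mpoly set \<Rightarrow> 'k mpoly set \<Rightarrow> 'k mpoly set set" where
  "Ass R I = {P. prime_ideal_in R P \<and> (\<exists>f\<in>R. P = {g\<in>R. g * f \<in> I})}"

fun ideal_pow :: "('k::field) mpoly set \<Rightarrow> 'k mpoly set \<Rightarrow> nat \<Rightarrow> 'k mpoly set" where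
  "ideal_pow R I 0 = R"
| "ideal_pow R I (Suc k) = ideal_gen R {a * b | a b. a \<in> ideal_pow R I k \<and> b \<in> I}"

definition copersistent :: "('k::field) mpoly set \<Rightarrow> 'k mpoly set \<Rightarrow> bool" where
  "copersistent R I \<longleftrightarrow> (\<forall>k\<ge>1. Ass R (ideal_pow R I (Suc k)) \<subseteq> Ass R (ideal_pow R I k))"

definition mono_poly :: "(nat \<Rightarrow>\<^sub>0 nat) \<Rightarrow> ('k::field) mpoly" where
  "mono_poly m = Poly_Mapping.single m 1"

definition mon_dvd :: "(nat \<Rightarrow>\<^sub>0 nat) \<Rightarrow> (nat \<Rightarrow>\<^sub>0 nat) \<Rightarrow> bool" where
  "mon_dvd a b \<longleftrightarrow> (\<forall>i. Poly_Mapping.lookup a i \<le> Poly_Mapping.lookup b i)"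

definition monomial_ideal :: "nat set \<Rightarrow> ('k::field) mpoly set \<Rightarrow> bool" where
  "monomial_ideal V I \<longleftrightarrow> is_ideal_in (poly_ring V) I \<and>
     I = ideal_gen (poly_ring V) {mono_poly m | m. Poly_Mapping.keys m \<subseteq> V \<and> mono_poly m \<in> I}"

definition min_mon_gens :: "nat set \<Rightarrow> ('k::field) mpoly set \<Rightarrow> (nat \<Rightarrow>\<^sub>0 nat) set" where
  "min_mon_gens V I = {m. Poly_Mapping.keys m \<subseteq> V \<and> mono_poly m \<in> I \<and>
     \<not> (\<exists>m'. m' \<noteq> m \<and> mon_dvd m' m \<and> Poly_Mapping.keys m' \<subseteq> V \<and> mono_poly m' \<in> I)}"

text \<open>Contraction I/x_j: ideal of K[x_i : i in V - {j}] generated by the minimal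
  generators with x_j set to 1.\<close>
definition contraction :: "nat set \<Rightarrow> nat \<Rightarrow> ('k::field) mpoly set \<Rightarrow> 'k mpoly set" where
  "contraction V j I = ideal_gen (poly_ring (V - {j}))
     {mono_poly (m - Poly_Mapping.single j (Poly_Mapping.lookup m j)) | m. m \<in> min_mon_gens V I}"

end

theory Submission
  imports Defs
begin

text \<open>A monomial ideal \<open>L\<close> of \<open>R = K[x\<^sub>i : i \<in> V]\<close> is the span of its set \<open>E\<close> of exponent vectors,
  which is closed upwards under divisibility. Powers of \<open>L\<close> correspond to iterated sums of \<open>E\<close>, and
  the contraction \<open>L/x\<^sub>j\<close> to the set of \<open>c\<close> free of \<open>x\<^sub>j\<close> with \<open>c x\<^sub>j\<^sup>N \<in> E\<close> for some \<open>N\<close>; both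
  operations commute. The associated primes of \<open>R/L\<close> are the monomial primes \<open>(x\<^sub>i : i \<in> S)\<close> that
  occur as a colon ideal \<open>(L : x\<^sup>a)\<close>. Lifting \<open>x\<^sup>a\<close> to \<open>x\<^sup>a x\<^sub>j\<^sup>N\<close> for large \<open>N\<close> shows that the
  associated primes of \<open>R'/(L/x\<^sub>j)\<close> are exactly those of \<open>R/L\<close> not containing \<open>x\<^sub>j\<close>, so every
  inclusion between sets of associated primes of powers of \<open>L\<close> passes to the contraction.\<close>

abbreviation keys :: "('a \<Rightarrow>\<^sub>0 'b::zero) \<Rightarrow> 'a set" where "keys \<equiv> Poly_Mapping.keys"
abbreviation lookup :: "('a \<Rightarrow>\<^sub>0 'b::zero) \<Rightarrow> 'a \<Rightarrow> 'b" where "lookup \<equiv> Poly_Mapping.lookup"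
abbreviation single :: "'a \<Rightarrow> 'b \<Rightarrow> 'a \<Rightarrow>\<^sub>0 'b::zero" where "single \<equiv> Poly_Mapping.single"

lemma lookup_single_if: "lookup (single i n) k = (if i = k then n else 0)"
  by (simp add: lookup_single when_def)

lemmas lookup_simps = lookup_add lookup_minus lookup_single_if

lemma keys_add_nat: "keys (a + b :: 'a \<Rightarrow>\<^sub>0 nat) = keys a \<union> keys b"
  by (auto simp: in_keys_iff lookup_add)

lemma keys_diff_nat_subset: "keys (b - a :: 'a \<Rightarrow>\<^sub>0 nat) \<subseteq> keys b"
  by (auto simp: in_keys_iff lookup_minus)

section \<open>Exponent vectors\<close>

lemma mon_dvd_refl [simp]: "mon_dvd a a"
  by (simp add: mon_dvd_def)

lemma mon_dvd_trans: "mon_dvd a b \<Longrightarrow> mon_dvd b c \<Longrightarrow> mon_dvd a c"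
  unfolding mon_dvd_def using le_trans by blast

lemma mon_dvd_add_left [simp]: "mon_dvd a (c + a)"
  by (simp add: mon_dvd_def lookup_add)

lemma mon_dvd_add_mono: "mon_dvd a b \<Longrightarrow> mon_dvd c d \<Longrightarrow> mon_dvd (a + c) (b + d)"
  by (simp add: mon_dvd_def lookup_add add_mono)

lemma mon_dvd_diff [simp]: "mon_dvd (b - a) b"
  by (simp add: mon_dvd_def lookup_minus)

lemma mon_dvd_imp_eq_add_diff: "mon_dvd a b \<Longrightarrow> b = a + (b - a)"
  by (rule poly_mapping_eqI) (simp add: mon_dvd_def lookup_add lookup_minus)

lemma keys_subset_if_mon_dvd:
  assumes "mon_dvd a b"
  shows "keys a \<subseteq> keys b"
proof
  fix i assume "i \<in> keys a"
  moreover have "lookup a i \<le> lookup b i"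
    using assms by (simp add: mon_dvd_def)
  ultimately show "i \<in> keys b"
    by (auto simp: in_keys_iff)
qed

lemma mon_dvd_sum_lookup_less:
  assumes "mon_dvd a b" "a \<noteq> b" "finite K" "keys b \<subseteq> K"
  shows "sum (lookup a) K < sum (lookup b) K"
proof -
  obtain i where i: "lookup a i \<noteq> lookup b i"
    using assms(2) by (metis poly_mapping_eqI)
  with assms(1) have "lookup a i < lookup b i"
    by (simp add: mon_dvd_def le_neq_implies_less)
  moreover from this have "i \<in> K"
    using assms(4) by (auto simp: in_keys_iff)
  ultimately show ?thesis
    using assms(1,3) by (intro sum_strict_mono_ex1) (auto simp: mon_dvd_def)
qed

lemma obtain_minimal_divisor:
  assumes "e \<in> E"
  obtains m where "m \<in> E" "mon_dvd m e" "\<And>m'. m' \<in> E \<Longrightarrow> mon_dvd m' m \<Longrightarrow> m' = m"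
proof -
  let ?size = "\<lambda>m. sum (lookup m) (keys e)"
  obtain m where m: "m \<in> E \<and> mon_dvd m e"
    and least: "\<And>m'. m' \<in> E \<and> mon_dvd m' e \<Longrightarrow> ?size m \<le> ?size m'"
    using ex_has_least_nat[of "\<lambda>m. m \<in> E \<and> mon_dvd m e" e ?size] assms by auto
  have "m' = m" if "m' \<in> E" "mon_dvd m' m" for m'
  proof (rule ccontr)
    assume "m' \<noteq> m"
    have "keys m \<subseteq> keys e"
      using m keys_subset_if_mon_dvd by blast
    with \<open>m' \<noteq> m\<close> that(2) have "?size m' < ?size m"
      by (intro mon_dvd_sum_lookup_less) auto
    moreover have "?size m \<le> ?size m'"
      using least that m mon_dvd_trans by blast
    ultimately show False by simp
  qed
  with m that show ?thesis by blast
qed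

definition exps :: "nat set \<Rightarrow> (nat \<Rightarrow>\<^sub>0 nat) set" where
  "exps V = {m. keys m \<subseteq> V}"

lemma add_in_exps_iff [simp]: "a + b \<in> exps V \<longleftrightarrow> a \<in> exps V \<and> b \<in> exps V"
  by (auto simp: exps_def keys_add_nat)

lemma zero_in_exps [simp]: "0 \<in> exps V"
  by (simp add: exps_def)

lemma diff_in_exps: "b \<in> exps V \<Longrightarrow> b - a \<in> exps V"
  using keys_diff_nat_subset[of b a] by (auto simp: exps_def)

lemma single_in_exps_iff: "single i (Suc n) \<in> exps V \<longleftrightarrow> i \<in> V"
  by (simp add: exps_def)

lemma add_single_in_exps: "j \<in> V \<Longrightarrow> c \<in> exps (V - {j}) \<Longrightarrow> c + single j N \<in> exps V"
  by (auto simp: exps_def keys_add_nat)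

definition upward_closed :: "nat set \<Rightarrow> (nat \<Rightarrow>\<^sub>0 nat) set \<Rightarrow> bool" where
  "upward_closed V E \<longleftrightarrow> E \<subseteq> exps V \<and> (\<forall>a\<in>E. \<forall>b\<in>exps V. mon_dvd a b \<longrightarrow> b \<in> E)"

lemma upward_closedD:
  "upward_closed V E \<Longrightarrow> a \<in> E \<Longrightarrow> mon_dvd a b \<Longrightarrow> b \<in> exps V \<Longrightarrow> b \<in> E"
  by (auto simp: upward_closed_def)

lemma upward_closed_subset_exps: "upward_closed V E \<Longrightarrow> E \<subseteq> exps V"
  by (simp add: upward_closed_def)

lemma upward_closed_exps: "upward_closed V (exps V)"
  by (simp add: upward_closed_def)

definition upward_closure :: "nat set \<Rightarrow> (nat \<Rightarrow>\<^sub>0 nat) set \<Rightarrow> (nat \<Rightarrow>\<^sub>0 nat) set" where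
  "upward_closure V G = {c \<in> exps V. \<exists>m\<in>G. mon_dvd m c}"

lemma upward_closed_upward_closure: "upward_closed V (upward_closure V G)"
  unfolding upward_closed_def upward_closure_def by (auto intro: mon_dvd_trans)

section \<open>Polynomial rings and their ideals\<close>

lemma keys_add_subsetI: "keys p \<subseteq> A \<Longrightarrow> keys q \<subseteq> A \<Longrightarrow> keys (p + q) \<subseteq> A"
  by (meson keys_add le_sup_iff order_trans)

lemma keys_mult_subsetI:
  fixes p q :: "('a::monoid_add \<Rightarrow>\<^sub>0 'b::semiring_0)"
  assumes "\<And>a b. a \<in> keys p \<Longrightarrow> b \<in> keys q \<Longrightarrow> a + b \<in> A"
  shows "keys (p * q) \<subseteq> A"
proof
  fix c assume "c \<in> keys (p * q)"
  then obtain a b where "c = a + b" "a \<in> keys p" "b \<in> keys q"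
    using keys_mult by blast
  with assms show "c \<in> A" by simp
qed

lemma mono_poly_add: "(mono_poly (a + b) :: ('k::field) mpoly) = mono_poly a * mono_poly b"
  by (simp add: mono_poly_def mult_single)

lemma mono_poly_zero [simp]: "(mono_poly 0 :: ('k::field) mpoly) = 1"
  by (simp add: mono_poly_def)

lemma keys_mono_poly [simp]: "keys (mono_poly m :: ('k::field) mpoly) = {m}"
  by (simp add: mono_poly_def)

lemma mono_poly_eq_mult_if_mon_dvd:
  "mon_dvd m c \<Longrightarrow> (mono_poly c :: ('k::field) mpoly) = mono_poly (c - m) * mono_poly m"
  by (metis mon_dvd_imp_eq_add_diff mono_poly_add mult.commute)

lemma single_eq_const_mult_mono_poly:
  "(single c k :: ('k::field) mpoly) = single 0 k * mono_poly c"
  by (simp add: mono_poly_def mult_single)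

lemma poly_mapping_eq_sum_single: "p = (\<Sum>c\<in>keys p. single c (lookup p c))"
proof (rule poly_mapping_eqI)
  fix k
  have "lookup (\<Sum>c\<in>keys p. single c (lookup p c)) k = (\<Sum>c\<in>keys p. if c = k then lookup p c else 0)"
    by (simp add: lookup_sum lookup_single_if)
  also have "\<dots> = lookup p k"
    by (simp add: in_keys_iff)
  finally show "lookup p k = lookup (\<Sum>c\<in>keys p. single c (lookup p c)) k" by simp
qed

lemma lookup_mult_mono_poly:
  "lookup (g * (mono_poly a :: ('k::field) mpoly)) (b + a) = lookup g b"
proof -
  have "g * (mono_poly a :: 'k mpoly) = (\<Sum>c\<in>keys g. single (c + a) (lookup g c))"
    by (subst poly_mapping_eq_sum_single[of g])
      (simp add: sum_distrib_right mono_poly_def mult_single)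
  then have "lookup (g * (mono_poly a :: 'k mpoly)) (b + a) = (\<Sum>c\<in>keys g. if c = b then lookup g c else 0)"
    by (simp add: lookup_sum lookup_single_if)
  also have "\<dots> = lookup g b"
    by (simp add: in_keys_iff)
  finally show ?thesis .
qed

lemma keys_mult_mono_poly:
  "keys (g * (mono_poly a :: ('k::field) mpoly)) = (\<lambda>b. b + a) ` keys g"
proof (intro set_eqI iffI)
  fix x assume "x \<in> keys (g * (mono_poly a :: 'k mpoly))"
  then show "x \<in> (\<lambda>b. b + a) ` keys g"
    using keys_mult_subsetI[of g "mono_poly a" "(\<lambda>b. b + a) ` keys g"] by auto
next
  fix x assume "x \<in> (\<lambda>b. b + a) ` keys g"
  then show "x \<in> keys (g * (mono_poly a :: 'k mpoly))"
    by (auto simp: in_keys_iff lookup_mult_mono_poly)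
qed

lemma poly_ring_iff: "p \<in> poly_ring V \<longleftrightarrow> keys p \<subseteq> exps V"
  by (auto simp: poly_ring_def exps_def)

lemma poly_ring_add: "p \<in> poly_ring V \<Longrightarrow> q \<in> poly_ring V \<Longrightarrow> p + q \<in> poly_ring V"
  unfolding poly_ring_iff by (rule keys_add_subsetI)

lemma poly_ring_mult: "p \<in> poly_ring V \<Longrightarrow> q \<in> poly_ring V \<Longrightarrow> p * q \<in> poly_ring V"
  unfolding poly_ring_iff by (rule keys_mult_subsetI) auto

lemma poly_ring_uminus: "p \<in> poly_ring V \<Longrightarrow> - p \<in> poly_ring V"
  by (simp add: poly_ring_iff)

lemma poly_ring_diff: "p \<in> poly_ring V \<Longrightarrow> q \<in> poly_ring V \<Longrightarrow> p - q \<in> poly_ring V"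
  by (metis diff_conv_add_uminus poly_ring_add poly_ring_uminus)

lemma zero_in_poly_ring [simp]: "0 \<in> poly_ring V"
  and one_in_poly_ring [simp]: "1 \<in> poly_ring V"
  and const_in_poly_ring [simp]: "single 0 k \<in> poly_ring V"
  by (simp_all add: poly_ring_iff)

lemma poly_ring_power: "p \<in> poly_ring V \<Longrightarrow> p ^ n \<in> poly_ring V"
  by (induction n) (simp_all add: poly_ring_mult)

lemma mono_poly_in_poly_ring: "m \<in> exps V \<Longrightarrow> (mono_poly m :: ('k::field) mpoly) \<in> poly_ring V"
  by (simp add: poly_ring_iff)

lemma is_ideal_in_poly_ring: "is_ideal_in (poly_ring V) (poly_ring V)"
  by (simp add: is_ideal_in_def poly_ring_add poly_ring_mult)

lemma ideal_add: "is_ideal_in R I \<Longrightarrow> a \<in> I \<Longrightarrow> b \<in> I \<Longrightarrow> a + b \<in> I"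
  and ideal_zero: "is_ideal_in R I \<Longrightarrow> 0 \<in> I"
  and ideal_mult_left: "is_ideal_in R I \<Longrightarrow> r \<in> R \<Longrightarrow> a \<in> I \<Longrightarrow> r * a \<in> I"
  and ideal_subset: "is_ideal_in R I \<Longrightarrow> I \<subseteq> R"
  by (simp_all add: is_ideal_in_def)

lemma ideal_mult_right: "is_ideal_in R I \<Longrightarrow> r \<in> R \<Longrightarrow> a \<in> I \<Longrightarrow> a * r \<in> I"
  by (metis ideal_mult_left mult.commute)

lemma ideal_diff:
  assumes "is_ideal_in (poly_ring V) I" "a \<in> I" "b \<in> I"
  shows "a - b \<in> I"
proof -
  have "(-1) * b \<in> I"
    using assms poly_ring_uminus[OF one_in_poly_ring] by (blast intro: ideal_mult_left)
  from ideal_add[OF assms(1,2) this] show ?thesis by simp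
qed

lemma ideal_sum: "is_ideal_in R I \<Longrightarrow> (\<And>x. x \<in> A \<Longrightarrow> f x \<in> I) \<Longrightarrow> sum f A \<in> I"
  by (induction A rule: infinite_finite_induct) (simp_all add: ideal_add ideal_zero)

lemma ideal_gen_least: "is_ideal_in R J \<Longrightarrow> S \<subseteq> J \<Longrightarrow> ideal_gen R S \<subseteq> J"
  unfolding ideal_gen_def by blast

lemma ideal_gen_superset: "x \<in> S \<Longrightarrow> x \<in> ideal_gen R S"
  unfolding ideal_gen_def by blast

lemma is_ideal_in_ideal_gen:
  assumes "S \<subseteq> poly_ring V"
  shows "is_ideal_in (poly_ring V) (ideal_gen (poly_ring V) S)"
proof -
  let ?Js = "{J. is_ideal_in (poly_ring V) J \<and> S \<subseteq> J}"
  have "poly_ring V \<in> ?Js"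
    using assms is_ideal_in_poly_ring by blast
  then have "\<Inter>?Js \<subseteq> poly_ring V"
    by blast
  moreover have "0 \<in> \<Inter>?Js"
    by (auto simp: ideal_zero)
  moreover have "a + b \<in> \<Inter>?Js" if "a \<in> \<Inter>?Js" "b \<in> \<Inter>?Js" for a b
    using that by (auto simp: ideal_add)
  moreover have "r * a \<in> \<Inter>?Js" if "r \<in> poly_ring V" "a \<in> \<Inter>?Js" for r a
    using that by (auto simp: ideal_mult_left)
  ultimately show ?thesis
    by (simp add: is_ideal_in_def ideal_gen_def)
qed

lemma prime_ideal_in_is_ideal: "prime_ideal_in R P \<Longrightarrow> is_ideal_in R P"
  by (simp add: prime_ideal_in_def)

lemma prime_ideal_inD:
  "prime_ideal_in R P \<Longrightarrow> a \<in> R \<Longrightarrow> b \<in> R \<Longrightarrow> a * b \<in> P \<Longrightarrow> a \<in> P \<or> b \<in> P"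
  by (simp add: prime_ideal_in_def)

lemma one_notin_prime_ideal:
  assumes "prime_ideal_in (poly_ring V) P"
  shows "1 \<notin> P"
proof
  assume "1 \<in> P"
  then have "r \<in> P" if "r \<in> poly_ring V" for r
    using ideal_mult_right[OF prime_ideal_in_is_ideal[OF assms] that \<open>1 \<in> P\<close>] by simp
  with assms show False
    by (auto simp: prime_ideal_in_def is_ideal_in_def)
qed

lemma prime_ideal_power_mem:
  assumes P: "prime_ideal_in (poly_ring V) P" and x: "x \<in> poly_ring V" and "x ^ n \<in> P"
  shows "x \<in> P"
  using assms(3)
proof (induction n)
  case 0
  with one_notin_prime_ideal[OF P] show ?case by simp
next
  case (Suc n)
  then show ?case
    using prime_ideal_inD[OF P x poly_ring_power[OF x]] by auto
qed

section \<open>Ideals spanned by sets of monomials\<close>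

definition supp_ideal :: "nat set \<Rightarrow> (nat \<Rightarrow>\<^sub>0 nat) set \<Rightarrow> ('k::field) mpoly set" where
  "supp_ideal V E = {p \<in> poly_ring V. keys p \<subseteq> E}"

lemma mono_poly_in_supp_ideal_iff:
  "(mono_poly m :: ('k::field) mpoly) \<in> supp_ideal V E \<longleftrightarrow> m \<in> exps V \<and> m \<in> E"
  by (simp add: supp_ideal_def poly_ring_iff)

lemma supp_ideal_subset_poly_ring: "supp_ideal V E \<subseteq> poly_ring V"
  by (auto simp: supp_ideal_def)

lemma supp_ideal_exps: "supp_ideal V (exps V) = poly_ring V"
  by (auto simp: supp_ideal_def poly_ring_iff)

lemma is_ideal_supp_ideal:
  assumes E: "upward_closed V E"
  shows "is_ideal_in (poly_ring V) (supp_ideal V E :: ('k::field) mpoly set)"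
  unfolding is_ideal_in_def
proof (intro conjI ballI)
  fix a b :: "'k mpoly"
  assume a: "a \<in> supp_ideal V E"
  { assume "b \<in> supp_ideal V E"
    with a show "a + b \<in> supp_ideal V E"
      by (simp add: supp_ideal_def poly_ring_add keys_add_subsetI) }
  { assume b: "b \<in> poly_ring V"
    have "x + y \<in> E" if "x \<in> keys b" "y \<in> keys a" for x y
      using upward_closedD[OF E, of y "x + y"] that a b
      by (auto simp: supp_ideal_def poly_ring_iff)
    then have "keys (b * a) \<subseteq> E"
      by (rule keys_mult_subsetI)
    with a b show "b * a \<in> supp_ideal V E"
      by (simp add: supp_ideal_def poly_ring_mult) }
qed (auto simp: supp_ideal_def)

lemma supp_ideal_subset_ideal:
  fixes J :: "('k::field) mpoly set"
  assumes J: "is_ideal_in (poly_ring V) J" and F: "\<And>m. m \<in> F \<Longrightarrow> mono_poly m \<in> J"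
  shows "supp_ideal V F \<subseteq> J"
proof
  fix p :: "'k mpoly" assume "p \<in> supp_ideal V F"
  then have "keys p \<subseteq> F" by (simp add: supp_ideal_def)
  have "p = (\<Sum>c\<in>keys p. single c (lookup p c))"
    by (rule poly_mapping_eq_sum_single)
  also have "\<dots> = (\<Sum>c\<in>keys p. single 0 (lookup p c) * mono_poly c)"
    by (rule sum.cong[OF refl]) (rule single_eq_const_mult_mono_poly)
  also have "\<dots> \<in> J"
    using \<open>keys p \<subseteq> F\<close> F by (intro ideal_sum[OF J] ideal_mult_left[OF J]) auto
  finally show "p \<in> J" .
qed

lemma ideal_mem_if_monomials_mem:
  fixes J :: "('k::field) mpoly set"
  assumes "is_ideal_in (poly_ring V) J" "g \<in> poly_ring V" "\<And>c. c \<in> keys g \<Longrightarrow> mono_poly c \<in> J"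
  shows "g \<in> J"
  using supp_ideal_subset_ideal[of V J "keys g"] assms by (auto simp: supp_ideal_def)

lemma ideal_gen_eq_supp_ideal:
  fixes S :: "('k::field) mpoly set"
  assumes F: "upward_closed V F" and S: "S \<subseteq> supp_ideal V F"
    and M: "\<And>m. m \<in> F \<Longrightarrow> mono_poly m \<in> ideal_gen (poly_ring V) S"
  shows "ideal_gen (poly_ring V) S = supp_ideal V F"
proof
  show "ideal_gen (poly_ring V) S \<subseteq> supp_ideal V F"
    by (rule ideal_gen_least[OF is_ideal_supp_ideal[OF F] S])
  have "S \<subseteq> poly_ring V"
    using S supp_ideal_subset_poly_ring by blast
  from is_ideal_in_ideal_gen[OF this] M
  show "supp_ideal V F \<subseteq> ideal_gen (poly_ring V) S"
    by (rule supp_ideal_subset_ideal)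
qed

lemma ideal_gen_mono_polys:
  assumes G: "G \<subseteq> exps V"
  shows "ideal_gen (poly_ring V) {mono_poly m |m. m \<in> G}
    = (supp_ideal V (upward_closure V G) :: ('k::field) mpoly set)"
proof (rule ideal_gen_eq_supp_ideal[OF upward_closed_upward_closure])
  let ?S = "{mono_poly m |m. m \<in> G} :: 'k mpoly set"
  have "m \<in> upward_closure V G" if "m \<in> G" for m
    using that G mon_dvd_refl unfolding upward_closure_def by blast
  with G show "?S \<subseteq> supp_ideal V (upward_closure V G)"
    by (auto simp: mono_poly_in_supp_ideal_iff)
  fix c assume "c \<in> upward_closure V G"
  then obtain m where m: "m \<in> G" "mon_dvd m c" and c: "c \<in> exps V"
    by (auto simp: upward_closure_def)
  have "?S \<subseteq> poly_ring V"
    using G by (auto simp: mono_poly_in_poly_ring)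
  moreover have "mono_poly m \<in> ideal_gen (poly_ring V) ?S"
    using m(1) by (blast intro: ideal_gen_superset)
  ultimately have "mono_poly (c - m) * mono_poly m \<in> ideal_gen (poly_ring V) ?S"
    by (intro ideal_mult_left[OF is_ideal_in_ideal_gen] mono_poly_in_poly_ring diff_in_exps c)
  then show "mono_poly c \<in> ideal_gen (poly_ring V) ?S"
    by (simp add: mono_poly_eq_mult_if_mon_dvd[OF m(2)])
qed

lemma monomial_ideal_eq_supp_ideal:
  fixes I :: "('k::field) mpoly set"
  assumes "monomial_ideal V I"
  obtains E where "upward_closed V E" "I = supp_ideal V E"
proof
  let ?G = "{m. keys m \<subseteq> V \<and> mono_poly m \<in> I}"
  have "I = ideal_gen (poly_ring V) {mono_poly m |m. m \<in> ?G}"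
    using assms by (simp add: monomial_ideal_def)
  also have "\<dots> = supp_ideal V (upward_closure V ?G)"
    by (rule ideal_gen_mono_polys) (auto simp: exps_def)
  finally show "I = supp_ideal V (upward_closure V ?G)" .
qed (rule upward_closed_upward_closure)

section \<open>Powers and contractions of monomial ideals\<close>

definition sumset :: "nat set \<Rightarrow> (nat \<Rightarrow>\<^sub>0 nat) set \<Rightarrow> (nat \<Rightarrow>\<^sub>0 nat) set \<Rightarrow> (nat \<Rightarrow>\<^sub>0 nat) set" where
  "sumset V A B = {c \<in> exps V. \<exists>a\<in>A. \<exists>b\<in>B. mon_dvd (a + b) c}"

lemma upward_closed_sumset: "upward_closed V (sumset V A B)"
  unfolding upward_closed_def sumset_def by (auto intro: mon_dvd_trans)

lemma add_in_sumset:
  assumes "a \<in> A" "b \<in> B" "upward_closed V A" "upward_closed V B"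
  shows "a + b \<in> sumset V A B"
proof -
  have "a + b \<in> exps V"
    using assms by (auto dest: upward_closed_subset_exps)
  with assms(1,2) mon_dvd_refl show ?thesis
    unfolding sumset_def by blast
qed

lemma ideal_gen_products_supp_ideal:
  assumes A: "upward_closed V A" and B: "upward_closed V B"
  shows "ideal_gen (poly_ring V) {a * b | a b. a \<in> supp_ideal V A \<and> b \<in> supp_ideal V B}
       = (supp_ideal V (sumset V A B) :: ('k::field) mpoly set)"
proof (rule ideal_gen_eq_supp_ideal[OF upward_closed_sumset])
  let ?S = "{a * b | a b. a \<in> supp_ideal V A \<and> b \<in> supp_ideal V B} :: 'k mpoly set"
  show S: "?S \<subseteq> supp_ideal V (sumset V A B)"
  proof
    fix x assume "x \<in> ?S"
    then obtain a b where x: "x = a * b" "a \<in> supp_ideal V A" "b \<in> supp_ideal V B"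
      by blast
    have "y + z \<in> sumset V A B" if "y \<in> keys a" "z \<in> keys b" for y z
      using that x by (intro add_in_sumset A B) (auto simp: supp_ideal_def)
    then have "keys x \<subseteq> sumset V A B"
      unfolding x(1) by (rule keys_mult_subsetI)
    with x show "x \<in> supp_ideal V (sumset V A B)"
      by (simp add: supp_ideal_def poly_ring_mult)
  qed
  fix c assume "c \<in> sumset V A B"
  then obtain a b where ab: "a \<in> A" "b \<in> B" "mon_dvd (a + b) c" and c: "c \<in> exps V"
    by (auto simp: sumset_def)
  have "mono_poly a \<in> supp_ideal V A" "mono_poly b \<in> supp_ideal V B"
    using ab upward_closed_subset_exps[OF A] upward_closed_subset_exps[OF B]
    by (auto simp: mono_poly_in_supp_ideal_iff)
  then have "mono_poly a * mono_poly b \<in> ?S"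
    by blast
  then have "mono_poly (a + b) \<in> ideal_gen (poly_ring V) ?S"
    by (simp add: mono_poly_add ideal_gen_superset)
  moreover have "?S \<subseteq> poly_ring V"
    using S supp_ideal_subset_poly_ring by blast
  ultimately have "mono_poly (c - (a + b)) * mono_poly (a + b) \<in> ideal_gen (poly_ring V) ?S"
    by (intro ideal_mult_left[OF is_ideal_in_ideal_gen] mono_poly_in_poly_ring diff_in_exps c)
  then show "mono_poly c \<in> ideal_gen (poly_ring V) ?S"
    by (simp add: mono_poly_eq_mult_if_mon_dvd[OF ab(3)])
qed

fun sumset_pow :: "nat set \<Rightarrow> (nat \<Rightarrow>\<^sub>0 nat) set \<Rightarrow> nat \<Rightarrow> (nat \<Rightarrow>\<^sub>0 nat) set" where
  "sumset_pow V E 0 = exps V"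
| "sumset_pow V E (Suc k) = sumset V (sumset_pow V E k) E"

lemma upward_closed_sumset_pow: "upward_closed V (sumset_pow V E k)"
  by (cases k) (simp_all add: upward_closed_exps upward_closed_sumset)

lemma ideal_pow_supp_ideal:
  assumes "upward_closed V E"
  shows "ideal_pow (poly_ring V) (supp_ideal V E :: ('k::field) mpoly set) k = supp_ideal V (sumset_pow V E k)"
proof (induction k)
  case 0
  then show ?case by (simp add: supp_ideal_exps)
next
  case (Suc k)
  then show ?case
    using ideal_gen_products_supp_ideal[OF upward_closed_sumset_pow assms] by simp
qed

definition contract_exps :: "nat set \<Rightarrow> nat \<Rightarrow> (nat \<Rightarrow>\<^sub>0 nat) set \<Rightarrow> (nat \<Rightarrow>\<^sub>0 nat) set" where
  "contract_exps V j E = {c \<in> exps (V - {j}). \<exists>N. c + single j N \<in> E}"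

definition erase_var :: "nat \<Rightarrow> (nat \<Rightarrow>\<^sub>0 nat) \<Rightarrow> (nat \<Rightarrow>\<^sub>0 nat)" where
  "erase_var j m = m - single j (lookup m j)"

lemma lookup_erase_var: "lookup (erase_var j m) i = (if i = j then 0 else lookup m i)"
  by (simp add: erase_var_def lookup_minus lookup_single_if)

lemma erase_var_in_exps: "m \<in> exps V \<Longrightarrow> erase_var j m \<in> exps (V - {j})"
  by (auto simp: exps_def in_keys_iff lookup_erase_var split: if_splits)

lemma erase_var_add_single_lookup: "erase_var j m + single j (lookup m j) = m"
  by (rule poly_mapping_eqI) (simp add: lookup_simps lookup_erase_var)

lemma erase_var_add: "erase_var j (a + b) = erase_var j a + erase_var j b"
  by (rule poly_mapping_eqI) (simp add: lookup_add lookup_erase_var)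

lemma mon_dvd_erase_var: "mon_dvd a b \<Longrightarrow> mon_dvd (erase_var j a) (erase_var j b)"
  by (simp add: mon_dvd_def lookup_erase_var)

lemma erase_var_id: "c \<in> exps (V - {j}) \<Longrightarrow> erase_var j c = c"
  by (rule poly_mapping_eqI) (auto simp: lookup_erase_var exps_def in_keys_iff)

lemma erase_var_single [simp]: "erase_var j (single j N) = 0"
  by (rule poly_mapping_eqI) (simp add: lookup_erase_var lookup_single_if)

lemma erase_var_in_contract_exps:
  assumes "a \<in> E" "E \<subseteq> exps V"
  shows "erase_var j a \<in> contract_exps V j E"
proof -
  have "erase_var j a + single j (lookup a j) \<in> E"
    using assms(1) by (simp add: erase_var_add_single_lookup)
  moreover have "erase_var j a \<in> exps (V - {j})"
    using assms by (auto intro: erase_var_in_exps)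
  ultimately show ?thesis
    unfolding contract_exps_def by blast
qed

lemma upward_closed_contract_exps:
  assumes j: "j \<in> V" and E: "upward_closed V E"
  shows "upward_closed (V - {j}) (contract_exps V j E)"
  unfolding upward_closed_def
proof (intro conjI ballI impI)
  fix a b assume a: "a \<in> contract_exps V j E" and b: "b \<in> exps (V - {j})" and "mon_dvd a b"
  obtain N where "a + single j N \<in> E"
    using a by (auto simp: contract_exps_def)
  moreover have "mon_dvd (a + single j N) (b + single j N)"
    using \<open>mon_dvd a b\<close> by (rule mon_dvd_add_mono) simp
  ultimately have "b + single j N \<in> E"
    using upward_closedD[OF E] add_single_in_exps[OF j b] by blast
  with b show "b \<in> contract_exps V j E"
    by (auto simp: contract_exps_def)
qed (auto simp: contract_exps_def)

lemma contract_exps_exps: "j \<in> V \<Longrightarrow> contract_exps V j (exps V) = exps (V - {j})"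
  using add_single_in_exps by (fastforce simp: contract_exps_def)

lemma contract_exps_sumset:
  assumes j: "j \<in> V" and A: "upward_closed V A" and B: "upward_closed V B"
  shows "contract_exps V j (sumset V A B) = sumset (V - {j}) (contract_exps V j A) (contract_exps V j B)"
proof (intro set_eqI iffI)
  fix c assume "c \<in> contract_exps V j (sumset V A B)"
  then obtain N a b where c: "c \<in> exps (V - {j})" and ab: "a \<in> A" "b \<in> B"
    and dvd: "mon_dvd (a + b) (c + single j N)"
    by (auto simp: contract_exps_def sumset_def)
  have "erase_var j a \<in> contract_exps V j A" "erase_var j b \<in> contract_exps V j B"
    using ab upward_closed_subset_exps[OF A] upward_closed_subset_exps[OF B]
    by (auto intro: erase_var_in_contract_exps)
  moreover have "mon_dvd (erase_var j a + erase_var j b) c"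
    using mon_dvd_erase_var[OF dvd, of j] by (simp add: erase_var_add erase_var_id[OF c])
  ultimately show "c \<in> sumset (V - {j}) (contract_exps V j A) (contract_exps V j B)"
    using c by (auto simp: sumset_def)
next
  fix c assume "c \<in> sumset (V - {j}) (contract_exps V j A) (contract_exps V j B)"
  then obtain a b N1 N2 where c: "c \<in> exps (V - {j})" and dvd: "mon_dvd (a + b) c"
    and ab: "a + single j N1 \<in> A" "b + single j N2 \<in> B"
    by (auto simp: sumset_def contract_exps_def)
  have "mon_dvd ((a + single j N1) + (b + single j N2)) (c + single j (N1 + N2))"
    using dvd by (auto simp: mon_dvd_def lookup_simps)
  with ab have "c + single j (N1 + N2) \<in> sumset V A B"
    using add_single_in_exps[OF j c] by (auto simp: sumset_def)
  with c show "c \<in> contract_exps V j (sumset V A B)"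
    by (auto simp: contract_exps_def)
qed

lemma contract_exps_sumset_pow:
  assumes "j \<in> V" "upward_closed V E"
  shows "contract_exps V j (sumset_pow V E k) = sumset_pow (V - {j}) (contract_exps V j E) k"
  by (induction k) (simp_all add: assms contract_exps_exps contract_exps_sumset upward_closed_sumset_pow)

lemma min_mon_gens_supp_ideal:
  assumes "E \<subseteq> exps V"
  shows "min_mon_gens V (supp_ideal V E :: ('k::field) mpoly set)
    = {m \<in> E. \<forall>m'\<in>E. mon_dvd m' m \<longrightarrow> m' = m}"
  using assms by (auto simp: min_mon_gens_def mono_poly_in_supp_ideal_iff exps_def subset_iff)

lemma contraction_supp_ideal:
  assumes j: "j \<in> V" and E: "upward_closed V E"
  shows "contraction V j (supp_ideal V E :: ('k::field) mpoly set)
    = supp_ideal (V - {j}) (contract_exps V j E)"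
proof -
  let ?G = "min_mon_gens V (supp_ideal V E :: 'k mpoly set)"
  have G: "?G = {m \<in> E. \<forall>m'\<in>E. mon_dvd m' m \<longrightarrow> m' = m}"
    by (rule min_mon_gens_supp_ideal[OF upward_closed_subset_exps[OF E]])
  have "contraction V j (supp_ideal V E :: 'k mpoly set)
      = ideal_gen (poly_ring (V - {j})) {mono_poly m |m. m \<in> erase_var j ` ?G}"
    unfolding contraction_def erase_var_def by (rule arg_cong[where f = "ideal_gen _"]) blast
  also have "\<dots> = supp_ideal (V - {j}) (upward_closure (V - {j}) (erase_var j ` ?G))"
    using upward_closed_subset_exps[OF E] erase_var_in_exps
    by (intro ideal_gen_mono_polys) (auto simp: G)
  also have "upward_closure (V - {j}) (erase_var j ` ?G) = contract_exps V j E"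
  proof (intro set_eqI iffI)
    fix c assume "c \<in> upward_closure (V - {j}) (erase_var j ` ?G)"
    then obtain m where m: "m \<in> E" "mon_dvd (erase_var j m) c" and c: "c \<in> exps (V - {j})"
      by (auto simp: upward_closure_def G)
    have "mon_dvd m (c + single j (lookup m j))"
      using m(2) by (auto simp: mon_dvd_def lookup_simps lookup_erase_var split: if_splits)
    with m(1) have "c + single j (lookup m j) \<in> E"
      using upward_closedD[OF E] add_single_in_exps[OF j c] by blast
    with c show "c \<in> contract_exps V j E"
      by (auto simp: contract_exps_def)
  next
    fix c assume "c \<in> contract_exps V j E"
    then obtain N where c: "c \<in> exps (V - {j})" "c + single j N \<in> E"
      by (auto simp: contract_exps_def)
    obtain m where m: "m \<in> E" "mon_dvd m (c + single j N)"
      and min: "\<And>m'. m' \<in> E \<Longrightarrow> mon_dvd m' m \<Longrightarrow> m' = m"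
      using obtain_minimal_divisor[OF c(2)] by blast
    from m(1) min have "m \<in> ?G"
      by (simp add: G)
    moreover have "mon_dvd (erase_var j m) c"
      using mon_dvd_erase_var[OF m(2), of j] by (simp add: erase_var_add erase_var_id[OF c(1)])
    ultimately show "c \<in> upward_closure (V - {j}) (erase_var j ` ?G)"
      using c(1) by (auto simp: upward_closure_def)
  qed
  finally show ?thesis .
qed

section \<open>Associated primes of monomial ideals\<close>

lift_definition restrict_keys :: "'a set \<Rightarrow> ('a \<Rightarrow>\<^sub>0 'b::zero) \<Rightarrow> 'a \<Rightarrow>\<^sub>0 'b"
  is "\<lambda>Q f x. if x \<in> Q then f x else 0"
  by (erule finite_subset[rotated]) auto

lemma lookup_restrict_keys: "lookup (restrict_keys Q p) c = (if c \<in> Q then lookup p c else 0)"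
  by transfer simp

lemma keys_restrict_keys: "keys (restrict_keys Q p) = keys p \<inter> Q"
  by (auto simp: in_keys_iff lookup_restrict_keys split: if_splits)

lemma diff_restrict_keys_compl: "p - restrict_keys (- Q) p = restrict_keys Q p"
  by (rule poly_mapping_eqI) (simp add: lookup_minus lookup_restrict_keys)

lemma restrict_keys_in_poly_ring: "p \<in> poly_ring V \<Longrightarrow> restrict_keys Q p \<in> poly_ring V"
  by (auto simp: poly_ring_iff keys_restrict_keys)

lemma restrict_keys_in_supp_ideal: "p \<in> poly_ring V \<Longrightarrow> restrict_keys E p \<in> supp_ideal V E"
  by (simp add: supp_ideal_def restrict_keys_in_poly_ring keys_restrict_keys)

definition var_prime_exps :: "nat set \<Rightarrow> nat set \<Rightarrow> (nat \<Rightarrow>\<^sub>0 nat) set" where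
  "var_prime_exps V S = {c \<in> exps V. \<exists>i\<in>S. 0 < lookup c i}"

lemma upward_closed_var_prime_exps: "upward_closed V (var_prime_exps V S)"
  unfolding upward_closed_def var_prime_exps_def mon_dvd_def by (auto intro: less_le_trans)

lemma keys_mult_disjoint_var_prime_exps:
  fixes p q :: "('k::field) mpoly"
  assumes "p \<in> poly_ring V" "q \<in> poly_ring V"
    and "keys p \<inter> var_prime_exps V S = {}" "keys q \<inter> var_prime_exps V S = {}"
  shows "keys (p * q) \<inter> var_prime_exps V S = {}"
proof -
  have "y + z \<notin> var_prime_exps V S" if "y \<in> keys p" "z \<in> keys q" for y z
    using that assms by (auto simp: var_prime_exps_def poly_ring_iff lookup_add)
  then show ?thesis
    using keys_mult_subsetI[of p q "- var_prime_exps V S"] by blast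
qed

lemma prime_ideal_var_prime:
  "prime_ideal_in (poly_ring V) (supp_ideal V (var_prime_exps V S) :: ('k::field) mpoly set)"
  unfolding prime_ideal_in_def
proof (intro conjI ballI impI)
  let ?Q = "var_prime_exps V S"
  let ?P = "supp_ideal V ?Q :: 'k mpoly set"
  show P: "is_ideal_in (poly_ring V) ?P"
    by (rule is_ideal_supp_ideal[OF upward_closed_var_prime_exps])
  have "(1 :: 'k mpoly) \<notin> ?P"
    by (simp add: supp_ideal_def var_prime_exps_def)
  then show "?P \<noteq> poly_ring V"
    by auto
  fix a b :: "'k mpoly"
  assume a: "a \<in> poly_ring V" and b: "b \<in> poly_ring V" and ab: "a * b \<in> ?P"
  define a0 where "a0 = restrict_keys (- ?Q) a"
  define b0 where "b0 = restrict_keys (- ?Q) b"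
  have a1: "a - a0 \<in> ?P" and b1: "b - b0 \<in> ?P"
    using a b by (simp_all add: a0_def b0_def diff_restrict_keys_compl restrict_keys_in_supp_ideal)
  have a0: "a0 \<in> poly_ring V" and b0: "b0 \<in> poly_ring V"
    using a b by (simp_all add: a0_def b0_def restrict_keys_in_poly_ring)
  have "a0 * b0 = a * b - (a - a0) * b - a0 * (b - b0)"
    by (simp add: algebra_simps)
  also have "\<dots> \<in> ?P"
    using ab a1 b1 a0 b by (intro ideal_diff[OF P]) (auto intro: ideal_mult_left ideal_mult_right P)
  finally have "keys (a0 * b0) \<subseteq> ?Q"
    by (simp add: supp_ideal_def)
  moreover have "keys (a0 * b0) \<inter> ?Q = {}"
    using a0 b0 by (intro keys_mult_disjoint_var_prime_exps) (auto simp: a0_def b0_def keys_restrict_keys)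
  ultimately have "keys (a0 * b0) = {}"
    by blast
  then have "a0 = 0 \<or> b0 = 0"
    by simp
  then show "a \<in> ?P \<or> b \<in> ?P"
    using a1 b1 by auto
qed

lemma single_in_var_prime_exps_iff: "i \<in> V \<Longrightarrow> single i 1 \<in> var_prime_exps V S \<longleftrightarrow> i \<in> S"
  by (auto simp: var_prime_exps_def exps_def lookup_single_if)

text \<open>A minimal element of \<open>F\<close> is a variable times a smaller monomial, which is not in \<open>F\<close>.\<close>
lemma supp_ideal_prime_imp_var_prime:
  assumes F: "upward_closed V F"
    and P: "prime_ideal_in (poly_ring V) (supp_ideal V F :: ('k::field) mpoly set)"
  shows "F = var_prime_exps V {i \<in> V. single i 1 \<in> F}"
proof (intro set_eqI iffI)
  fix c assume "c \<in> var_prime_exps V {i \<in> V. single i 1 \<in> F}"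
  then obtain i where "c \<in> exps V" "single i 1 \<in> F" "0 < lookup c i"
    by (auto simp: var_prime_exps_def)
  then show "c \<in> F"
    using upward_closedD[OF F] by (auto simp: mon_dvd_def lookup_single_if)
next
  fix c assume "c \<in> F"
  obtain m where m: "m \<in> F" "mon_dvd m c" and min: "\<And>m'. m' \<in> F \<Longrightarrow> mon_dvd m' m \<Longrightarrow> m' = m"
    using obtain_minimal_divisor[OF \<open>c \<in> F\<close>] by blast
  have mV: "m \<in> exps V" and cV: "c \<in> exps V"
    using m \<open>c \<in> F\<close> upward_closed_subset_exps[OF F] by auto
  have "m \<noteq> 0"
    using m(1) one_notin_prime_ideal[OF P] mono_poly_in_supp_ideal_iff[of 0 V F] by auto
  then obtain i where i: "0 < lookup m i"
    by (metis lookup_zero neq0_conv poly_mapping_eqI)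
  then have iV: "i \<in> V"
    using mV by (auto simp: exps_def in_keys_iff)
  have dvd: "mon_dvd (single i 1) m"
    using i by (auto simp: mon_dvd_def lookup_single_if)
  have "lookup (m - single i 1) i \<noteq> lookup m i"
    using i by (simp add: lookup_minus)
  then have "m - single i 1 \<noteq> m"
    by auto
  then have "m - single i 1 \<notin> F"
    using min[OF _ mon_dvd_diff] by blast
  moreover have "mono_poly (m - single i 1) * mono_poly (single i 1) \<in> (supp_ideal V F :: 'k mpoly set)"
    unfolding mono_poly_eq_mult_if_mon_dvd[OF dvd, symmetric]
    using m(1) mV by (simp add: mono_poly_in_supp_ideal_iff)
  then have "mono_poly (m - single i 1) \<in> (supp_ideal V F :: 'k mpoly set) \<or>
      mono_poly (single i 1) \<in> (supp_ideal V F :: 'k mpoly set)"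
    using mV iV
    by (intro prime_ideal_inD[OF P] mono_poly_in_poly_ring diff_in_exps) (simp_all add: single_in_exps_iff)
  ultimately have "single i 1 \<in> F"
    by (simp add: mono_poly_in_supp_ideal_iff)
  moreover have "0 < lookup c i"
    using i m(2) by (auto simp: mon_dvd_def intro: less_le_trans)
  ultimately show "c \<in> var_prime_exps V {i \<in> V. single i 1 \<in> F}"
    using cV iV by (auto simp: var_prime_exps_def)
qed

definition colon_exps :: "nat set \<Rightarrow> (nat \<Rightarrow>\<^sub>0 nat) set \<Rightarrow> (nat \<Rightarrow>\<^sub>0 nat) \<Rightarrow> (nat \<Rightarrow>\<^sub>0 nat) set" where
  "colon_exps V E a = {c \<in> exps V. a + c \<in> E}"

lemma upward_closed_colon_exps:
  assumes E: "upward_closed V E"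
  shows "upward_closed V (colon_exps V E a)"
  unfolding upward_closed_def
proof (intro conjI ballI impI)
  fix x b assume x: "x \<in> colon_exps V E a" and b: "b \<in> exps V" and "mon_dvd x b"
  then have "mon_dvd (a + x) (a + b)"
    by (intro mon_dvd_add_mono) simp_all
  moreover have "a + b \<in> exps V"
    using x b upward_closed_subset_exps[OF E] by (auto simp: colon_exps_def)
  ultimately have "a + b \<in> E"
    using x upward_closedD[OF E] by (auto simp: colon_exps_def)
  with b show "b \<in> colon_exps V E a"
    by (simp add: colon_exps_def)
qed (auto simp: colon_exps_def)

lemma colon_mono_poly_supp_ideal:
  assumes E: "upward_closed V E"
  shows "{g \<in> poly_ring V. g * mono_poly a \<in> supp_ideal V E} = (supp_ideal V (colon_exps V E a) :: ('k::field) mpoly set)"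
proof -
  have "g * mono_poly a \<in> supp_ideal V E \<longleftrightarrow> keys g \<subseteq> colon_exps V E a"
    if g: "g \<in> poly_ring V" for g :: "'k mpoly"
  proof -
    have "g * mono_poly a \<in> supp_ideal V E \<longleftrightarrow> (\<forall>b\<in>keys g. b + a \<in> E)"
      using g upward_closed_subset_exps[OF E]
      by (auto simp: supp_ideal_def keys_mult_mono_poly poly_ring_iff)
    also have "\<dots> \<longleftrightarrow> keys g \<subseteq> colon_exps V E a"
      using g by (auto simp: colon_exps_def poly_ring_iff add.commute)
    finally show ?thesis .
  qed
  then show ?thesis
    by (auto simp: supp_ideal_def)
qed

lemma mult_in_supp_ideal_iff_restrict_keys_compl:
  assumes E: "upward_closed V E" and "r \<in> poly_ring V" "h \<in> poly_ring V"
  shows "r * h \<in> supp_ideal V E \<longleftrightarrow> r * restrict_keys (- E) h \<in> supp_ideal V E"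
proof -
  have L: "is_ideal_in (poly_ring V) (supp_ideal V E :: ('k::field) mpoly set)"
    by (rule is_ideal_supp_ideal[OF E])
  have "r * (h - restrict_keys (- E) h) \<in> supp_ideal V E"
    using assms by (simp add: diff_restrict_keys_compl restrict_keys_in_supp_ideal ideal_mult_left[OF L])
  then show ?thesis
    using ideal_add[OF L] ideal_diff[OF L] by (fastforce simp: algebra_simps)
qed

text \<open>\<open>Min\<close> refers to the lexicographic order on exponent vectors from \<open>Poly_Mapping\<close>, which is
  compatible with addition.\<close>
definition lowest_term :: "('a::linorder \<Rightarrow>\<^sub>0 'b::zero) \<Rightarrow> 'a \<Rightarrow>\<^sub>0 'b" where
  "lowest_term p = single (Min (keys p)) (lookup p (Min (keys p)))"

lemma keys_diff_lowest_term:
  "keys (p - lowest_term p :: 'a::linorder \<Rightarrow>\<^sub>0 'b::ab_group_add) = keys p - {Min (keys p)}"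
  by (auto simp: lowest_term_def in_keys_iff lookup_simps split: if_splits)

lemma Min_keys_less_keys_diff_lowest_term:
  assumes "x \<in> keys (p - lowest_term p :: 'a::linorder \<Rightarrow>\<^sub>0 'b::ab_group_add)"
  shows "Min (keys p) < x"
proof -
  have "x \<in> keys p" "x \<noteq> Min (keys p)"
    using assms by (simp_all add: keys_diff_lowest_term)
  then show ?thesis
    using Min_le[OF finite_keys] by (simp add: order.strict_iff_order)
qed

lemma lowest_term_in_poly_ring: "p \<in> poly_ring V \<Longrightarrow> lowest_term p \<in> poly_ring V"
  by (cases "p = 0") (auto simp: lowest_term_def poly_ring_iff)

lemma lookup_mult_eq_zero:
  assumes "\<And>x y. x \<in> keys p \<Longrightarrow> y \<in> keys q \<Longrightarrow> x + y \<noteq> k"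
  shows "lookup (p * q :: ('k::field) mpoly) k = 0"
  using keys_mult_subsetI[of p q "- {k}"] assms by (auto simp: in_keys_iff)

lemma lookup_mult_Min_keys:
  fixes g h :: "('k::field) mpoly"
  shows "lookup (g * h) (Min (keys g) + Min (keys h)) = lookup g (Min (keys g)) * lookup h (Min (keys h))"
proof -
  define m where "m = Min (keys g)"
  define n where "n = Min (keys h)"
  define g' where "g' = g - lowest_term g"
  define h' where "h' = h - lowest_term h"
  have g': "\<And>x. x \<in> keys g' \<Longrightarrow> m < x" and h': "\<And>y. y \<in> keys h' \<Longrightarrow> n < y"
    unfolding g'_def h'_def m_def n_def by (fact Min_keys_less_keys_diff_lowest_term)+
  have "g * h = lowest_term g * lowest_term h + lowest_term g * h' + g' * lowest_term h + g' * h'"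
    by (simp add: g'_def h'_def algebra_simps)
  moreover have "lookup (lowest_term g * h') (m + n) = 0"
    using h' by (intro lookup_mult_eq_zero) (auto simp: lowest_term_def m_def split: if_splits)
  moreover have "lookup (g' * lowest_term h) (m + n) = 0"
    using g' by (intro lookup_mult_eq_zero) (auto simp: lowest_term_def n_def split: if_splits)
  moreover have "lookup (g' * h') (m + n) = 0"
    using g' h' by (intro lookup_mult_eq_zero) (metis add_strict_mono order_less_irrefl)
  ultimately show ?thesis
    by (simp add: lookup_add lowest_term_def mult_single m_def n_def)
qed

lemma mono_poly_Min_keys_mult_lowest_term_in_supp_ideal:
  fixes g h :: "('k::field) mpoly"
  assumes E: "upward_closed V E" and "g \<noteq> 0" "h \<noteq> 0" "g * h \<in> supp_ideal V E"
  shows "mono_poly (Min (keys g)) * lowest_term h \<in> supp_ideal V E"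
proof -
  have "Min (keys g) \<in> keys g" "Min (keys h) \<in> keys h"
    using assms(2,3) by simp_all
  then have "lookup (g * h) (Min (keys g) + Min (keys h)) \<noteq> 0"
    by (simp add: lookup_mult_Min_keys in_keys_iff)
  with assms(4) have "Min (keys g) + Min (keys h) \<in> E"
    by (auto simp: supp_ideal_def in_keys_iff)
  with upward_closed_subset_exps[OF E] show ?thesis
    by (auto simp: lowest_term_def mono_poly_def mult_single supp_ideal_def poly_ring_iff)
qed

lemma card_keys_mult_mono_poly: "card (keys (mono_poly a * h :: ('k::field) mpoly)) = card (keys h)"
proof -
  have "keys (mono_poly a * h :: 'k mpoly) = (\<lambda>b. b + a) ` keys h"
    by (simp add: mult.commute keys_mult_mono_poly)
  moreover have "inj_on (\<lambda>b. b + a) (keys h)"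
    by (rule inj_onI) simp
  ultimately show ?thesis
    by (simp add: card_image)
qed

text \<open>If \<open>g h \<in> L\<close>, multiplying \<open>h\<close> by the lowest monomial \<open>X\<close> of \<open>g\<close> moves the lowest term of
  \<open>h\<close> outside \<open>L\<close> into \<open>L\<close>; after one such step per term outside \<open>L\<close>, all of \<open>h\<close> is in \<open>L\<close>.\<close>
lemma mono_poly_Min_keys_power_mult_in_supp_ideal:
  fixes g h :: "('k::field) mpoly"
  assumes E: "upward_closed V E" and g: "g \<in> poly_ring V" "g \<noteq> 0"
    and h: "h \<in> poly_ring V" "g * h \<in> supp_ideal V E" and n: "card (keys h - E) \<le> n"
  shows "mono_poly (Min (keys g)) ^ n * h \<in> supp_ideal V E"
  using h n
proof (induction n arbitrary: h)
  let ?L = "supp_ideal V E :: 'k mpoly set"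
  let ?X = "mono_poly (Min (keys g)) :: 'k mpoly"
  have L: "is_ideal_in (poly_ring V) ?L"
    by (rule is_ideal_supp_ideal[OF E])
  have X: "?X \<in> poly_ring V"
    using g by (intro mono_poly_in_poly_ring) (auto simp: poly_ring_iff)
  {
    case 0
    then show ?case
      by (simp add: supp_ideal_def)
  next
    case (Suc n h)
    define h0 where "h0 = restrict_keys (- E) h"
    have h0: "h0 \<in> poly_ring V" "keys h0 = keys h - E"
      using Suc.prems(1) by (auto simp: h0_def restrict_keys_in_poly_ring keys_restrict_keys)
    have gh0: "g * h0 \<in> ?L"
      using Suc.prems g(1) by (simp add: h0_def flip: mult_in_supp_ideal_iff_restrict_keys_compl[OF E])
    have "?X ^ Suc n * h0 \<in> ?L"
    proof (cases "h0 = 0")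
      case True
      then show ?thesis
        using ideal_zero[OF L] by simp
    next
      case False
      define hs where "hs = ?X * (h0 - lowest_term h0)"
      have Xt: "?X * lowest_term h0 \<in> ?L"
        by (rule mono_poly_Min_keys_mult_lowest_term_in_supp_ideal[OF E g(2) False gh0])
      have "hs \<in> poly_ring V"
        using X h0(1) by (simp add: hs_def poly_ring_mult poly_ring_diff lowest_term_in_poly_ring)
      moreover have "g * hs = ?X * (g * h0) - g * (?X * lowest_term h0)"
        by (simp add: hs_def algebra_simps)
      then have "g * hs \<in> ?L"
        using X g(1) gh0 Xt by (metis ideal_diff[OF L] ideal_mult_left[OF L])
      moreover have "card (keys hs - E) \<le> n"
      proof -
        have "card (keys hs - E) \<le> card (keys hs)"
          by (rule card_mono) auto
        also have "\<dots> = card (keys (h0 - lowest_term h0))"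
          by (simp add: hs_def card_keys_mult_mono_poly)
        also have "\<dots> < card (keys h0)"
          unfolding keys_diff_lowest_term using False by (intro card_Diff1_less) auto
        finally show ?thesis
          using Suc.prems(3) h0(2) by simp
      qed
      ultimately have "?X ^ n * hs \<in> ?L"
        by (rule Suc.IH)
      moreover have "?X ^ Suc n * h0 = ?X ^ n * hs + ?X ^ n * (?X * lowest_term h0)"
        by (simp add: hs_def algebra_simps)
      ultimately show ?thesis
        using Xt poly_ring_power[OF X] by (metis ideal_add[OF L] ideal_mult_left[OF L])
    qed
    then show ?case
      using mult_in_supp_ideal_iff_restrict_keys_compl[OF E poly_ring_power[OF X] Suc.prems(1)]
      unfolding h0_def by blast
  }
qed

text \<open>Induction on the number of terms of \<open>g\<close>: a power of its lowest monomial lies in \<open>P\<close> by the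
  previous lemma, hence so does the monomial, which can then be removed from \<open>g\<close>.\<close>
lemma mono_poly_in_prime_annihilator:
  fixes P :: "('k::field) mpoly set"
  assumes E: "upward_closed V E" and P: "prime_ideal_in (poly_ring V) P"
    and f: "f \<in> poly_ring V" and Pf: "P = {g \<in> poly_ring V. g * f \<in> supp_ideal V E}"
    and "g \<in> P" "c \<in> keys g"
  shows "mono_poly c \<in> P"
  using assms(5,6)
proof (induction "card (keys g)" arbitrary: g rule: less_induct)
  case less
  have IP: "is_ideal_in (poly_ring V) P"
    by (rule prime_ideal_in_is_ideal[OF P])
  have g: "g \<in> poly_ring V" "g * f \<in> supp_ideal V E" "g \<noteq> 0"
    using less.prems Pf by auto
  let ?m = "Min (keys g)"
  have "?m \<in> keys g"
    using g(3) by simp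
  then have X: "(mono_poly ?m :: 'k mpoly) \<in> poly_ring V"
    using g(1) by (intro mono_poly_in_poly_ring) (auto simp: poly_ring_iff)
  have "mono_poly ?m ^ card (keys f - E) * f \<in> supp_ideal V E"
    using E g f by (intro mono_poly_Min_keys_power_mult_in_supp_ideal) auto
  then have "mono_poly ?m ^ card (keys f - E) \<in> P"
    using Pf poly_ring_power[OF X] by simp
  then have Xm: "mono_poly ?m \<in> P"
    by (rule prime_ideal_power_mem[OF P X])
  show ?case
  proof (cases "c = ?m")
    case True
    with Xm show ?thesis by (simp only:)
  next
    case False
    define g' where "g' = g - lowest_term g"
    have keys_g': "keys g' = keys g - {?m}"
      by (simp add: g'_def keys_diff_lowest_term)
    have "lowest_term g \<in> P"
      unfolding lowest_term_def
      by (subst single_eq_const_mult_mono_poly) (rule ideal_mult_left[OF IP const_in_poly_ring Xm])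
    then have "g' \<in> P"
      unfolding g'_def using less.prems(1) by (rule ideal_diff[OF IP, rotated])
    moreover have "card (keys g') < card (keys g)"
      unfolding keys_g' by (rule card_Diff1_less[OF finite_keys \<open>?m \<in> keys g\<close>])
    moreover have "c \<in> keys g'"
      using less.prems(2) False by (simp add: keys_g')
    ultimately show ?thesis
      using less.hyps by blast
  qed
qed

text \<open>If every \<open>J a\<close> had an element outside \<open>P\<close>, their product would lie in the intersection but
  not in \<open>P\<close>.\<close>
lemma prime_ideal_in_contains_ideal_if_contains_Inter:
  assumes P: "prime_ideal_in R P" and "finite A" "A \<noteq> {}"
    and J: "\<And>a. a \<in> A \<Longrightarrow> is_ideal_in R (J a)" and sub: "(\<Inter>a\<in>A. J a) \<subseteq> P"
  shows "\<exists>a\<in>A. J a \<subseteq> P"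
proof (rule ccontr)
  assume "\<not> (\<exists>a\<in>A. J a \<subseteq> P)"
  then have out: "\<exists>g\<in>J a. g \<notin> P" if "a \<in> A" for a
    using that by blast
  have "\<exists>g\<in>R. g \<notin> P \<and> (\<forall>a\<in>B. g \<in> J a)" if "B \<subseteq> A" for B
    using finite_subset[OF that \<open>finite A\<close>] that
  proof (induction B rule: finite_induct)
    case empty
    then show ?case
      using P unfolding prime_ideal_in_def is_ideal_in_def by blast
  next
    case (insert b B)
    then obtain g where g: "g \<in> R" "g \<notin> P" "\<forall>a\<in>B. g \<in> J a"
      by auto
    have b: "b \<in> A"
      using insert.prems by blast
    obtain h where h: "h \<in> J b" "h \<notin> P"
      using out[OF b] by blast
    have hR: "h \<in> R"
      using ideal_subset[OF J[OF b]] h(1) by blast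
    have "g * h \<notin> P"
      using g(1,2) h(2) hR prime_ideal_inD[OF P] by blast
    moreover have "g * h \<in> J b"
      by (rule ideal_mult_left[OF J[OF b] g(1) h(1)])
    moreover have "g * h \<in> J a" if "a \<in> B" for a
    proof -
      have "a \<in> A"
        using that insert.prems by blast
      with that g(3) show ?thesis
        using ideal_mult_right[OF J hR] by blast
    qed
    moreover have "g * h \<in> R"
      using calculation(2) ideal_subset[OF J[OF b]] by blast
    ultimately show ?case
      by blast
  qed
  from this[OF order_refl] sub \<open>A \<noteq> {}\<close> show False
    by blast
qed

lemma mult_in_ideal_if_mult_mono_polys_in:
  fixes J :: "('k::field) mpoly set"
  assumes J: "is_ideal_in (poly_ring V) J" and fJ: "\<And>a. a \<in> keys f \<Longrightarrow> g * mono_poly a \<in> J"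
  shows "g * f \<in> J"
proof -
  have "f = (\<Sum>a\<in>keys f. single a (lookup f a))"
    by (rule poly_mapping_eq_sum_single)
  also have "\<dots> = (\<Sum>a\<in>keys f. single 0 (lookup f a) * mono_poly a)"
    by (rule sum.cong[OF refl]) (rule single_eq_const_mult_mono_poly)
  finally have "g * f = g * (\<Sum>a\<in>keys f. single 0 (lookup f a) * mono_poly a)"
    by (rule arg_cong)
  also have "\<dots> = (\<Sum>a\<in>keys f. single 0 (lookup f a) * (g * mono_poly a))"
    by (simp add: sum_distrib_left mult.left_commute)
  also have "\<dots> \<in> J"
    using fJ by (intro ideal_sum[OF J] ideal_mult_left[OF J const_in_poly_ring])
  finally show ?thesis .
qed

text \<open>Writing \<open>f = f\<^sub>1 + f\<^sub>0\<close> with \<open>f\<^sub>1 \<in> L\<close> and no term of \<open>f\<^sub>0\<close> in \<open>L\<close>, a prime \<open>P = (L : f)\<close> is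
  monomial, so it is contained in every \<open>(L : x\<^sup>a)\<close> with \<open>a\<close> in the support of \<open>f\<^sub>0\<close>, and it contains
  their intersection; by prime avoidance it equals one of them.\<close>
lemma prime_annihilator_eq_colon_mono_poly:
  fixes P :: "('k::field) mpoly set"
  assumes E: "upward_closed V E" and P: "prime_ideal_in (poly_ring V) P"
    and f: "f \<in> poly_ring V" and Pf: "P = {g \<in> poly_ring V. g * f \<in> supp_ideal V E}"
  obtains a where "a \<in> exps V" "P = supp_ideal V (colon_exps V E a)"
proof -
  let ?L = "supp_ideal V E :: 'k mpoly set"
  let ?Q = "\<lambda>a. supp_ideal V (colon_exps V E a) :: 'k mpoly set"
  have L: "is_ideal_in (poly_ring V) ?L"
    by (rule is_ideal_supp_ideal[OF E])
  define f0 where "f0 = restrict_keys (- E) f"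
  have kf0: "keys f0 \<subseteq> keys f" "keys f0 \<subseteq> exps V"
    using f by (auto simp: f0_def keys_restrict_keys poly_ring_iff)
  have Pf0: "P = {g \<in> poly_ring V. g * f0 \<in> ?L}"
    using Pf f by (auto simp: f0_def mult_in_supp_ideal_iff_restrict_keys_compl[OF E])
  have "keys f0 \<noteq> {}"
    using Pf0 one_notin_prime_ideal[OF P] ideal_zero[OF L] by auto
  moreover have "is_ideal_in (poly_ring V) (?Q a)" for a
    by (rule is_ideal_supp_ideal[OF upward_closed_colon_exps[OF E]])
  moreover have "(\<Inter>a\<in>keys f0. ?Q a) \<subseteq> P"
  proof
    fix g assume "g \<in> (\<Inter>a\<in>keys f0. ?Q a)"
    then have "g \<in> poly_ring V" "\<And>a. a \<in> keys f0 \<Longrightarrow> g * mono_poly a \<in> ?L"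
      using \<open>keys f0 \<noteq> {}\<close> colon_mono_poly_supp_ideal[OF E] by blast+
    then show "g \<in> P"
      using mult_in_ideal_if_mult_mono_polys_in[OF L] Pf0 by blast
  qed
  ultimately obtain a where a: "a \<in> keys f0" "?Q a \<subseteq> P"
    using prime_ideal_in_contains_ideal_if_contains_Inter[OF P finite_keys, of f0 ?Q] by blast
  have "P \<subseteq> ?Q a"
  proof
    fix g assume g: "g \<in> P"
    have "mono_poly c \<in> ?Q a" if c: "c \<in> keys g" for c
    proof -
      have "mono_poly c * f \<in> ?L"
        using mono_poly_in_prime_annihilator[OF E P f Pf g c] Pf by blast
      then have "a + c \<in> E"
        using a(1) kf0(1) by (auto simp: supp_ideal_def keys_mult_mono_poly mult.commute)
      moreover have "c \<in> exps V"
        using g c Pf by (auto simp: poly_ring_iff)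
      ultimately show ?thesis
        by (simp add: mono_poly_in_supp_ideal_iff colon_exps_def)
    qed
    with g Pf show "g \<in> ?Q a"
      using ideal_mem_if_monomials_mem[OF is_ideal_supp_ideal[OF upward_closed_colon_exps[OF E]]]
      by blast
  qed
  with a kf0(2) that show ?thesis
    by blast
qed

definition ass_sets :: "nat set \<Rightarrow> (nat \<Rightarrow>\<^sub>0 nat) set \<Rightarrow> nat set set" where
  "ass_sets V E = {S. S \<subseteq> V \<and> (\<exists>a\<in>exps V. colon_exps V E a = var_prime_exps V S)}"

lemma Ass_supp_ideal:
  assumes E: "upward_closed V E"
  shows "Ass (poly_ring V) (supp_ideal V E :: ('k::field) mpoly set)
    = (\<lambda>S. supp_ideal V (var_prime_exps V S)) ` ass_sets V E"
proof (intro set_eqI iffI)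
  fix P :: "'k mpoly set" assume "P \<in> Ass (poly_ring V) (supp_ideal V E)"
  then obtain f where P: "prime_ideal_in (poly_ring V) P" and f: "f \<in> poly_ring V"
    and Pf: "P = {g \<in> poly_ring V. g * f \<in> supp_ideal V E}"
    by (auto simp: Ass_def)
  obtain a where a: "a \<in> exps V" and Pa: "P = supp_ideal V (colon_exps V E a)"
    by (rule prime_annihilator_eq_colon_mono_poly[OF E P f Pf])
  define S where "S = {i \<in> V. single i 1 \<in> colon_exps V E a}"
  have colon_a: "colon_exps V E a = var_prime_exps V S"
    unfolding S_def using P Pa by (intro supp_ideal_prime_imp_var_prime upward_closed_colon_exps E) simp
  have "S \<subseteq> V"
    by (auto simp: S_def)
  with a colon_a have "S \<in> ass_sets V E"
    unfolding ass_sets_def by blast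
  moreover have "P = supp_ideal V (var_prime_exps V S)"
    using Pa colon_a by simp
  ultimately show "P \<in> (\<lambda>S. supp_ideal V (var_prime_exps V S)) ` ass_sets V E"
    by (rule rev_image_eqI)
next
  fix P :: "'k mpoly set" assume "P \<in> (\<lambda>S. supp_ideal V (var_prime_exps V S)) ` ass_sets V E"
  then obtain S a where a: "a \<in> exps V" "colon_exps V E a = var_prime_exps V S"
    and P: "P = supp_ideal V (var_prime_exps V S)"
    by (auto simp: ass_sets_def)
  have "P = {g \<in> poly_ring V. g * mono_poly a \<in> supp_ideal V E}"
    by (simp add: P colon_mono_poly_supp_ideal[OF E] a(2))
  with P prime_ideal_var_prime mono_poly_in_poly_ring[OF a(1)]
  show "P \<in> Ass (poly_ring V) (supp_ideal V E)"
    by (auto simp: Ass_def)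
qed

lemma inj_on_supp_ideal_var_prime:
  "inj_on (\<lambda>S. supp_ideal V (var_prime_exps V S) :: ('k::field) mpoly set) (Pow V)"
proof (rule inj_onI)
  have mem: "i \<in> S \<longleftrightarrow> (mono_poly (single i 1) :: 'k mpoly) \<in> supp_ideal V (var_prime_exps V S)"
    if "i \<in> V" for i S
    using that single_in_var_prime_exps_iff[of i V S]
    by (simp add: mono_poly_in_supp_ideal_iff single_in_exps_iff)
  fix S S' assume "S \<in> Pow V" "S' \<in> Pow V"
    and eq: "(supp_ideal V (var_prime_exps V S) :: 'k mpoly set) = supp_ideal V (var_prime_exps V S')"
  show "S = S'"
  proof (intro set_eqI)
    fix i
    show "i \<in> S \<longleftrightarrow> i \<in> S'"
    proof (cases "i \<in> V")
      case True
      then show ?thesis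
        using mem[OF True, of S] mem[OF True, of S'] eq by simp
    next
      case False
      then show ?thesis
        using \<open>S \<in> Pow V\<close> \<open>S' \<in> Pow V\<close> by auto
    qed
  qed
qed

lemma inj_on_image_subset_iff:
  assumes "inj_on f C" "A \<subseteq> C" "B \<subseteq> C"
  shows "f ` A \<subseteq> f ` B \<longleftrightarrow> A \<subseteq> B"
proof
  assume sub: "f ` A \<subseteq> f ` B"
  show "A \<subseteq> B"
  proof
    fix x assume "x \<in> A"
    with sub have "f x \<in> f ` B"
      by blast
    with \<open>x \<in> A\<close> show "x \<in> B"
      using inj_on_image_mem_iff[OF assms(1) _ assms(3)] assms(2) by blast
  qed
qed (rule image_mono)

lemma Ass_supp_ideal_subset_iff:
  assumes "upward_closed V E" "upward_closed V E'"
  shows "Ass (poly_ring V) (supp_ideal V E :: ('k::field) mpoly set) \<subseteq> Ass (poly_ring V) (supp_ideal V E')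
    \<longleftrightarrow> ass_sets V E \<subseteq> ass_sets V E'"
proof -
  have "ass_sets V E \<subseteq> Pow V" "ass_sets V E' \<subseteq> Pow V"
    by (auto simp: ass_sets_def)
  then show ?thesis
    unfolding Ass_supp_ideal[OF assms(1)] Ass_supp_ideal[OF assms(2)]
    by (rule inj_on_image_subset_iff[OF inj_on_supp_ideal_var_prime])
qed

section \<open>Associated primes of the contraction\<close>

lemma colon_exps_contract_exps:
  assumes j: "j \<in> V" and E: "upward_closed V E" and a: "a \<in> exps V"
  shows "colon_exps (V - {j}) (contract_exps V j E) (erase_var j a) = contract_exps V j (colon_exps V E a)"
proof (intro set_eqI iffI)
  have split: "a + (c + single j N) = erase_var j a + c + single j (lookup a j + N)" for c N
    by (rule poly_mapping_eqI) (simp add: lookup_simps lookup_erase_var)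
  fix c
  {
    assume "c \<in> colon_exps (V - {j}) (contract_exps V j E) (erase_var j a)"
    then obtain N where c: "c \<in> exps (V - {j})" and N: "erase_var j a + c + single j N \<in> E"
      by (auto simp: colon_exps_def contract_exps_def)
    have cN: "c + single j N \<in> exps V"
      by (rule add_single_in_exps[OF j c])
    have "mon_dvd (erase_var j a + c + single j N) (a + (c + single j N))"
      unfolding split by (simp add: mon_dvd_def lookup_simps)
    with N have "a + (c + single j N) \<in> E"
      using upward_closedD[OF E] a cN by simp
    with c cN show "c \<in> contract_exps V j (colon_exps V E a)"
      by (auto simp: colon_exps_def contract_exps_def)
  next
    assume "c \<in> contract_exps V j (colon_exps V E a)"
    then obtain N where c: "c \<in> exps (V - {j})" and "a + (c + single j N) \<in> E"
      by (auto simp: colon_exps_def contract_exps_def)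
    then have "erase_var j a + c + single j (lookup a j + N) \<in> E"
      by (simp add: split)
    moreover have "erase_var j a + c \<in> exps (V - {j})"
      using a c by (simp add: erase_var_in_exps)
    ultimately show "c \<in> colon_exps (V - {j}) (contract_exps V j E) (erase_var j a)"
      using c by (auto simp: colon_exps_def contract_exps_def)
  }
qed

lemma contract_exps_var_prime_exps:
  assumes "j \<in> V" "j \<notin> S"
  shows "contract_exps V j (var_prime_exps V S) = var_prime_exps (V - {j}) S"
  using assms add_single_in_exps[OF assms(1)]
  by (auto simp: contract_exps_def var_prime_exps_def lookup_simps)

lemma var_prime_exps_if_contract_exps:
  assumes F: "upward_closed V F" and contract: "contract_exps V j F = var_prime_exps (V - {j}) S"
    and vars: "\<And>i. i \<in> S \<Longrightarrow> single i 1 \<in> F"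
  shows "F = var_prime_exps V S"
proof (intro set_eqI iffI)
  fix c assume "c \<in> F"
  then have "erase_var j c \<in> var_prime_exps (V - {j}) S"
    using erase_var_in_contract_exps upward_closed_subset_exps[OF F] contract by blast
  then have "\<exists>i\<in>S. 0 < lookup c i"
    by (auto simp: var_prime_exps_def lookup_erase_var split: if_splits)
  with \<open>c \<in> F\<close> upward_closed_subset_exps[OF F] show "c \<in> var_prime_exps V S"
    by (auto simp: var_prime_exps_def)
next
  fix c assume "c \<in> var_prime_exps V S"
  then obtain i where "c \<in> exps V" "i \<in> S" "0 < lookup c i"
    by (auto simp: var_prime_exps_def)
  then show "c \<in> F"
    using upward_closedD[OF F vars] by (auto simp: mon_dvd_def lookup_single_if)
qed

lemma ass_sets_subset_contract_exps:
  assumes j: "j \<in> V" and E: "upward_closed V E" and S: "S \<in> ass_sets V E" "j \<notin> S"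
  shows "S \<in> ass_sets (V - {j}) (contract_exps V j E)"
proof -
  obtain a where a: "a \<in> exps V" "colon_exps V E a = var_prime_exps V S" and "S \<subseteq> V"
    using S(1) by (auto simp: ass_sets_def)
  have "colon_exps (V - {j}) (contract_exps V j E) (erase_var j a) = var_prime_exps (V - {j}) S"
    by (simp add: colon_exps_contract_exps[OF j E a(1)] a(2) contract_exps_var_prime_exps[OF j S(2)])
  with \<open>S \<subseteq> V\<close> S(2) erase_var_in_exps[OF a(1)] show ?thesis
    unfolding ass_sets_def by blast
qed

text \<open>Conversely, a witness \<open>a'\<close> for the contraction lifts to \<open>a' x\<^sub>j\<^sup>N\<close>, with \<open>N\<close> large enough that
  \<open>a' x\<^sub>i x\<^sub>j\<^sup>N \<in> E\<close> for every \<open>i \<in> S\<close>; this needs \<open>S\<close> to be finite.\<close>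
lemma contract_exps_ass_sets_subset:
  assumes V: "finite V" and j: "j \<in> V" and E: "upward_closed V E"
    and S: "S \<in> ass_sets (V - {j}) (contract_exps V j E)"
  shows "S \<in> ass_sets V E"
proof -
  obtain a' where SV: "S \<subseteq> V - {j}" and a': "a' \<in> exps (V - {j})"
    and colon_a': "colon_exps (V - {j}) (contract_exps V j E) a' = var_prime_exps (V - {j}) S"
    using S by (auto simp: ass_sets_def)
  have "\<exists>N. a' + single i 1 + single j N \<in> E" if "i \<in> S" for i
  proof -
    have "single i 1 \<in> var_prime_exps (V - {j}) S"
      using that SV single_in_var_prime_exps_iff[of i "V - {j}" S] by blast
    then show ?thesis
      by (simp add: colon_a'[symmetric] colon_exps_def contract_exps_def add.assoc)
  qed
  then obtain Ni where Ni: "\<And>i. i \<in> S \<Longrightarrow> a' + single i 1 + single j (Ni i) \<in> E"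
    by metis
  define N where "N = (\<Sum>i\<in>S. Ni i)"
  define a where "a = a' + single j N"
  have a: "a \<in> exps V"
    unfolding a_def by (rule add_single_in_exps[OF j a'])
  have "erase_var j a = a'"
    by (simp add: a_def erase_var_add erase_var_id[OF a'])
  then have "contract_exps V j (colon_exps V E a) = var_prime_exps (V - {j}) S"
    using colon_exps_contract_exps[OF j E a] colon_a' by simp
  moreover have "single i 1 \<in> colon_exps V E a" if "i \<in> S" for i
  proof -
    have "Ni i \<le> N"
      using that finite_subset[OF SV] V by (auto simp: N_def intro: member_le_sum)
    then have "mon_dvd (a' + single i 1 + single j (Ni i)) (a + single i 1)"
      by (auto simp: a_def mon_dvd_def lookup_simps)
    moreover have "a + single i 1 \<in> exps V"
      using a that SV single_in_exps_iff[of i 0 V] by auto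
    ultimately have "a + single i 1 \<in> E"
      using upward_closedD[OF E Ni[OF that]] by blast
    then show ?thesis
      using that SV by (auto simp: colon_exps_def exps_def)
  qed
  ultimately have "colon_exps V E a = var_prime_exps V S"
    by (rule var_prime_exps_if_contract_exps[OF upward_closed_colon_exps[OF E]])
  moreover have "S \<subseteq> V"
    using SV by blast
  ultimately show ?thesis
    using a unfolding ass_sets_def by blast
qed

lemma ass_sets_contract_exps:
  assumes "finite V" "j \<in> V" "upward_closed V E"
  shows "ass_sets (V - {j}) (contract_exps V j E) = {S \<in> ass_sets V E. j \<notin> S}"
proof (intro set_eqI iffI)
  fix S assume S: "S \<in> ass_sets (V - {j}) (contract_exps V j E)"
  then have "j \<notin> S"
    by (auto simp: ass_sets_def)
  with contract_exps_ass_sets_subset[OF assms S] show "S \<in> {S \<in> ass_sets V E. j \<notin> S}"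
    by blast
next
  fix S assume "S \<in> {S \<in> ass_sets V E. j \<notin> S}"
  then show "S \<in> ass_sets (V - {j}) (contract_exps V j E)"
    using ass_sets_subset_contract_exps[OF assms(2,3)] by blast
qed

theorem corollary3p22:
  fixes n j :: nat and I :: "('k::field) mpoly set"
  assumes "1 \<le> j" and "j \<le> n"
    and "monomial_ideal {1..n} I"
    and "copersistent (poly_ring {1..n}) I"
  shows "copersistent (poly_ring ({1..n} - {j})) (contraction {1..n} j I)"
proof -
  define V where "V = {1..n}"
  have V: "finite V" and j: "j \<in> V"
    using assms(1,2) by (auto simp: V_def)
  obtain E where E: "upward_closed V E" and I: "I = supp_ideal V E"
    using monomial_ideal_eq_supp_ideal assms(3) unfolding V_def by blast
  let ?E = "sumset_pow V E" and ?E' = "\<lambda>k. contract_exps V j (sumset_pow V E k)"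
  have E': "upward_closed (V - {j}) (?E' k)" for k
    by (rule upward_closed_contract_exps[OF j upward_closed_sumset_pow])
  have pow_I: "ideal_pow (poly_ring V) I k = supp_ideal V (?E k)" for k
    unfolding I by (rule ideal_pow_supp_ideal[OF E])
  have pow_J: "ideal_pow (poly_ring (V - {j})) (contraction V j I) k = supp_ideal (V - {j}) (?E' k)" for k
    unfolding I contraction_supp_ideal[OF j E] contract_exps_sumset_pow[OF j E]
    by (rule ideal_pow_supp_ideal[OF upward_closed_contract_exps[OF j E]])
  have ass_mono: "ass_sets V (?E (Suc k)) \<subseteq> ass_sets V (?E k)" if "k \<ge> 1" for k
    using assms(4) that
    unfolding copersistent_def V_def[symmetric] pow_I
      Ass_supp_ideal_subset_iff[OF upward_closed_sumset_pow upward_closed_sumset_pow]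
    by blast
  have "ass_sets (V - {j}) (?E' (Suc k)) \<subseteq> ass_sets (V - {j}) (?E' k)" if "k \<ge> 1" for k
    unfolding ass_sets_contract_exps[OF V j upward_closed_sumset_pow]
    using ass_mono[OF that] by blast
  then show ?thesis
    unfolding copersistent_def V_def[symmetric] pow_J Ass_supp_ideal_subset_iff[OF E' E']
    by blast
qed

end
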